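(* For distinct $i,j\in\{1,2,3\}$, the element $y_i+y_j$ is perfect in $D^{2,2,2}$.
   Context: $D^{2,2,2}$ is the modular lattice generated by $x_1,y_1,x_2,y_2,x_3,y_3$ subject only to $x_i\subseteq y_i$ ($i=1,2,3$), with a greatest element $I$ adjoined. Join is written $a+b$. A representation $\rho$ of $D^{2,2,2}$ in a finite-dimensional vector space $X$ (over a field) is a lattice morphism from $D^{2,2,2}$ to the subspace lattice of $X$, with $\rho(I)=X$; it is determined by subspaces $X_i=\rho(x_i)\subseteq Y_i=\rho(y_i)\subseteq X$. $\rho$ is decomposable if $X=X'\oplus X''$ with $X',X''\neq0$ and $\rho(a)=(\rho(a)\cap X')+(\rho(a)\cap X'')$ for all $a$. It is indecomposable if $X\ne0$ and it is not decomposable. An element $a\in D^{2,2,2}$ is perfect if $\rho(a)\in\{0,X\}$ for every indecomposable representation $\rho$ in a space $X$. *)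

theory Defs
  imports Complex_Main
begin

text \<open>Terms of the lattice D^{2,2,2}: generators x_i, y_i (i = 1,2,3), the adjoined
  greatest element I, joins and meets.  Elements of D^{2,2,2} are classes of such terms;
  every representation (lattice morphism into a subspace lattice, which is modular)
  evaluates terms compatibly with the defining relations, so we work with terms.\<close>

datatype lterm = Xg nat | Yg nat | Top | Join lterm lterm | Meet lterm lterm

fun wf_lterm :: "lterm \<Rightarrow> bool" where
  "wf_lterm (Xg i) = (i \<in> {1,2,3})"
| "wf_lterm (Yg i) = (i \<in> {1,2,3})"
| "wf_lterm Top = True"
| "wf_lterm (Join a b) = (wf_lterm a \<and> wf_lterm b)"
| "wf_lterm (Meet a b) = (wf_lterm a \<and> wf_lterm b)"

definition ssum :: "'v::ab_group_add set \<Rightarrow> 'v set \<Rightarrow> 'v set" where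
  "ssum A B = {a + b | a b. a \<in> A \<and> b \<in> B}"

fun rep_eval :: "'v::ab_group_add set \<Rightarrow> (nat \<Rightarrow> 'v set) \<Rightarrow> (nat \<Rightarrow> 'v set) \<Rightarrow> lterm \<Rightarrow> 'v set" where
  "rep_eval X Xs Ys (Xg i) = Xs i"
| "rep_eval X Xs Ys (Yg i) = Ys i"
| "rep_eval X Xs Ys Top = X"
| "rep_eval X Xs Ys (Join a b) = ssum (rep_eval X Xs Ys a) (rep_eval X Xs Ys b)"
| "rep_eval X Xs Ys (Meet a b) = rep_eval X Xs Ys a \<inter> rep_eval X Xs Ys b"

definition is_rep :: "('k::field \<Rightarrow> 'v::ab_group_add \<Rightarrow> 'v) \<Rightarrow> 'v set \<Rightarrow> (nat \<Rightarrow> 'v set) \<Rightarrow> (nat \<Rightarrow> 'v set) \<Rightarrow> bool" where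
  "is_rep scale X Xs Ys \<longleftrightarrow>
     module.subspace scale X \<and>
     (\<exists>B. finite B \<and> B \<subseteq> X \<and> module.span scale B = X) \<and>
     (\<forall>i\<in>{1,2,3}. module.subspace scale (Xs i) \<and> module.subspace scale (Ys i) \<and>
                    Xs i \<subseteq> Ys i \<and> Ys i \<subseteq> X)"

definition decomposable :: "('k::field \<Rightarrow> 'v::ab_group_add \<Rightarrow> 'v) \<Rightarrow> 'v set \<Rightarrow> (nat \<Rightarrow> 'v set) \<Rightarrow> (nat \<Rightarrow> 'v set) \<Rightarrow> bool" where
  "decomposable scale X Xs Ys \<longleftrightarrow>
     (\<exists>X' X''. module.subspace scale X' \<and> module.subspace scale X'' \<and>
        X' \<inter> X'' = {0} \<and> ssum X' X'' = X \<and> X' \<noteq> {0} \<and> X'' \<noteq> {0} \<and>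
        (\<forall>a. wf_lterm a \<longrightarrow>
            rep_eval X Xs Ys a = ssum (rep_eval X Xs Ys a \<inter> X') (rep_eval X Xs Ys a \<inter> X'')))"

definition indecomposable :: "('k::field \<Rightarrow> 'v::ab_group_add \<Rightarrow> 'v) \<Rightarrow> 'v set \<Rightarrow> (nat \<Rightarrow> 'v set) \<Rightarrow> (nat \<Rightarrow> 'v set) \<Rightarrow> bool" where
  "indecomposable scale X Xs Ys \<longleftrightarrow> X \<noteq> {0} \<and> \<not> decomposable scale X Xs Ys"

text \<open>Perfect element (relative to the given field and ambient space type, which are
  universally quantified as type variables in the theorem).\<close>
definition perfect :: "('k::field \<Rightarrow> 'v::ab_group_add \<Rightarrow> 'v) \<Rightarrow> lterm \<Rightarrow> bool" where
  "perfect scale a \<longleftrightarrow>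
     (\<forall>X Xs Ys. is_rep scale X Xs Ys \<and> indecomposable scale X Xs Ys \<longrightarrow>
        rep_eval X Xs Ys a \<in> {{0}, X})"

end

theory Submission
  imports Defs
begin

text \<open>Let \<open>S = Y\<^sub>i + Y\<^sub>j\<close> and let \<open>k\<close> be the remaining index. If \<open>S\<close> is neither \<open>0\<close>
  nor \<open>X\<close>, the subspace \<open>S\<close> and the flag \<open>X\<^sub>k \<subseteq> Y\<^sub>k\<close> alone already admit a nontrivial
  decomposition \<open>X = P \<oplus> Q\<close> with \<open>S \<subseteq> P\<close> along which \<open>X\<^sub>k\<close> and \<open>Y\<^sub>k\<close> split. The remaining
  generators lie in \<open>S \<subseteq> P\<close>, so they split too, and the subspaces splitting along \<open>P \<oplus> Q\<close>
  are closed under sums and intersections; hence the whole representation decomposes.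
  Complements exist in every vector space.\<close>

definition splits_along :: "'v::ab_group_add set \<Rightarrow> 'v set \<Rightarrow> 'v set \<Rightarrow> bool" where
  "splits_along A P Q \<longleftrightarrow> A = ssum (A \<inter> P) (A \<inter> Q)"

context vector_space
begin

lemma subspace_ssum: "subspace A \<Longrightarrow> subspace B \<Longrightarrow> subspace (ssum A B)"
  unfolding ssum_def by (rule subspace_sums)

lemma ssum_least: "subspace C \<Longrightarrow> A \<subseteq> C \<Longrightarrow> B \<subseteq> C \<Longrightarrow> ssum A B \<subseteq> C"
  unfolding ssum_def by (auto intro: subspace_add)

lemma ssum_ge1: "subspace B \<Longrightarrow> A \<subseteq> ssum A B"
  unfolding ssum_def using subspace_0 by force

lemma ssum_ge2: "subspace A \<Longrightarrow> B \<subseteq> ssum A B"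
  unfolding ssum_def using subspace_0 by force

lemma ssum_mono: "A \<subseteq> A' \<Longrightarrow> B \<subseteq> B' \<Longrightarrow> ssum A B \<subseteq> ssum A' B'"
  unfolding ssum_def by blast

lemma subspace_complement_exists:
  assumes U: "subspace U" and V: "subspace V" and "U \<subseteq> V"
  obtains C where "subspace C" "C \<subseteq> V" "U \<inter> C = {0}" "ssum U C = V"
proof -
  obtain B where B: "B \<subseteq> U" "independent B" "U \<subseteq> span B"
    using maximal_independent_subset[of U] by blast
  obtain B' where B': "B \<subseteq> B'" "B' \<subseteq> V" "independent B'" "V \<subseteq> span B'"
    using maximal_independent_subset_extend[of B V] B \<open>U \<subseteq> V\<close> by blast
  have span_B: "span B = U" using span_subspace[OF B(1) B(3) U] .
  define C where "C = span (B' - B)"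
  have "ssum U C = span (B \<union> (B' - B))"
    unfolding ssum_def C_def span_B[symmetric] span_Un ..
  also have "\<dots> = V"
    using span_subspace[OF B'(2) B'(4) V] B'(1) by (simp add: Un_absorb1)
  finally have sum: "ssum U C = V" .
  have "x = 0" if x: "x \<in> U \<inter> C" for x
  proof -
    \<comment> \<open>the coordinates of \<open>x\<close> in the basis \<open>B'\<close> are supported both in \<open>B\<close> and in \<open>B' - B\<close>\<close>
    let ?R = "representation B' x"
    have "?R = representation B x"
      using representation_extend[OF B'(3) _ B'(1)] x span_B by blast
    moreover have "?R = representation (B' - B) x"
      using representation_extend[OF B'(3), of x "B' - B"] x unfolding C_def by blast
    ultimately have "?R = (\<lambda>b. 0)"
      using representation_ne_zero[of B x] representation_ne_zero[of "B' - B" x] by fastforce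
    moreover have "x \<in> span B'"
      using x span_mono[of "B' - B" B'] unfolding C_def by blast
    ultimately show "x = 0"
      using sum_nonzero_representation_eq[OF B'(3)] by fastforce
  qed
  moreover have "subspace C" "C \<subseteq> V"
    unfolding C_def using span_minimal[of "B' - B" V] B'(2) V by auto
  ultimately show ?thesis
    using that sum U subspace_0 by blast
qed

lemma splits_alongI:
  "subspace A \<Longrightarrow> A \<subseteq> ssum (A \<inter> P) (A \<inter> Q) \<Longrightarrow> splits_along A P Q"
  unfolding splits_along_def using ssum_least[of A "A \<inter> P" "A \<inter> Q"] by blast

lemma splits_alongE:
  assumes "splits_along A P Q" "v \<in> A"
  obtains p q where "v = p + q" "p \<in> A \<inter> P" "q \<in> A \<inter> Q"
proof -
  from assms have "v \<in> ssum (A \<inter> P) (A \<inter> Q)"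
    unfolding splits_along_def by (rule subst)
  then show ?thesis using that unfolding ssum_def by blast
qed

lemma splits_along_subset:
  assumes "subspace A" "subspace Q" "A \<subseteq> P"
  shows "splits_along A P Q"
  using assms ssum_ge1[of "A \<inter> Q" A] subspace_inter[of A Q]
  by (intro splits_alongI) (auto simp: Int_absorb2)

lemma splits_along_superset:
  assumes A: "subspace A" and "Q \<subseteq> A" "A \<subseteq> ssum P Q"
  shows "splits_along A P Q"
proof (rule splits_alongI[OF A], rule subsetI)
  fix v assume "v \<in> A"
  then obtain p q where "v = p + q" "p \<in> P" "q \<in> Q"
    using \<open>A \<subseteq> ssum P Q\<close> unfolding ssum_def by blast
  moreover have "p \<in> A"
    using subspace_diff[OF A \<open>v \<in> A\<close>, of q] \<open>q \<in> Q\<close> \<open>Q \<subseteq> A\<close> \<open>v = p + q\<close> by auto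
  ultimately show "v \<in> ssum (A \<inter> P) (A \<inter> Q)"
    using \<open>Q \<subseteq> A\<close> unfolding ssum_def by blast
qed

lemma splits_along_ssum:
  assumes "subspace A" "subspace B" "subspace P" "subspace Q"
    and "splits_along A P Q" "splits_along B P Q"
  shows "splits_along (ssum A B) P Q"
proof (rule splits_alongI[OF subspace_ssum[OF assms(1,2)]], rule subsetI)
  let ?AB = "ssum A B"
  fix v assume "v \<in> ?AB"
  then obtain a b where v: "v = a + b" "a \<in> A" "b \<in> B" unfolding ssum_def by blast
  obtain a1 a2 where a: "a = a1 + a2" "a1 \<in> A \<inter> P" "a2 \<in> A \<inter> Q"
    using splits_alongE[OF assms(5) \<open>a \<in> A\<close>] by blast
  obtain b1 b2 where b: "b = b1 + b2" "b1 \<in> B \<inter> P" "b2 \<in> B \<inter> Q"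
    using splits_alongE[OF assms(6) \<open>b \<in> B\<close>] by blast
  have "a1 + b1 \<in> ?AB \<inter> P" "a2 + b2 \<in> ?AB \<inter> Q"
    using a b assms(3,4) unfolding ssum_def by (auto intro: subspace_add)
  moreover have "v = (a1 + b1) + (a2 + b2)" using v a b by (simp add: algebra_simps)
  ultimately show "v \<in> ssum (?AB \<inter> P) (?AB \<inter> Q)" unfolding ssum_def by blast
qed

lemma splits_along_inter:
  assumes "subspace A" "subspace B" "subspace P" "subspace Q" "P \<inter> Q = {0}"
    and "splits_along A P Q" "splits_along B P Q"
  shows "splits_along (A \<inter> B) P Q"
proof (rule splits_alongI[OF subspace_inter[OF assms(1,2)]], rule subsetI)
  fix v assume v: "v \<in> A \<inter> B"
  obtain a1 a2 where a: "v = a1 + a2" "a1 \<in> A \<inter> P" "a2 \<in> A \<inter> Q"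
    using splits_alongE[OF assms(6) IntD1[OF v]] .
  obtain b1 b2 where b: "v = b1 + b2" "b1 \<in> B \<inter> P" "b2 \<in> B \<inter> Q"
    using splits_alongE[OF assms(7) IntD2[OF v]] .
  have sum_eq: "a1 + a2 = b1 + b2" using a(1) b(1) by simp
  have "a1 - b1 = b2 - a2" using sum_eq by (simp add: algebra_simps)
  moreover have "a1 - b1 \<in> P" "b2 - a2 \<in> Q"
    using a(2) b(2) a(3) b(3) subspace_diff[OF assms(3)] subspace_diff[OF assms(4)] by auto
  ultimately have "a1 - b1 \<in> P \<inter> Q"
    by simp
  then have "a1 - b1 = 0"
    using \<open>P \<inter> Q = {0}\<close> by blast
  then have "a1 = b1" "a2 = b2"
    using sum_eq by simp_all
  then show "v \<in> ssum (A \<inter> B \<inter> P) (A \<inter> B \<inter> Q)"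
    using a b unfolding ssum_def by blast
qed

lemma is_rep_subspace: "is_rep scale X Xs Ys \<Longrightarrow> subspace X"
  unfolding is_rep_def by blast

lemma is_rep_generators:
  "is_rep scale X Xs Ys \<Longrightarrow> l \<in> {1,2,3} \<Longrightarrow>
    subspace (Xs l) \<and> subspace (Ys l) \<and> Xs l \<subseteq> Ys l \<and> Ys l \<subseteq> X"
  unfolding is_rep_def by blast

lemma splits_along_rep_eval:
  assumes rep: "is_rep scale X Xs Ys"
    and P: "subspace P" and Q: "subspace Q" and "P \<inter> Q = {0}" "ssum P Q = X"
    and gens: "\<And>l. l \<in> {1,2,3} \<Longrightarrow> splits_along (Xs l) P Q \<and> splits_along (Ys l) P Q"
    and "wf_lterm a"
  shows "subspace (rep_eval X Xs Ys a) \<and> splits_along (rep_eval X Xs Ys a) P Q"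
  using \<open>wf_lterm a\<close>
proof (induction a)
  case (Xg l)
  then show ?case using gens is_rep_generators[OF rep] by simp
next
  case (Yg l)
  then show ?case using gens is_rep_generators[OF rep] by simp
next
  case Top
  have "subspace X" using is_rep_subspace[OF rep] .
  moreover have "Q \<subseteq> X" using ssum_ge2[OF P] \<open>ssum P Q = X\<close> by blast
  ultimately show ?case
    using splits_along_superset \<open>ssum P Q = X\<close> by simp
next
  case (Join a b)
  then show ?case using splits_along_ssum[OF _ _ P Q] subspace_ssum by simp
next
  case (Meet a b)
  then show ?case using splits_along_inter[OF _ _ P Q \<open>P \<inter> Q = {0}\<close>] subspace_inter by simp
qed

lemma decomposableI:
  assumes rep: "is_rep scale X Xs Ys"
    and "subspace P" "subspace Q" "P \<inter> Q = {0}" "ssum P Q = X" "P \<noteq> {0}" "Q \<noteq> {0}"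
    and "\<And>l. l \<in> {1,2,3} \<Longrightarrow> splits_along (Xs l) P Q \<and> splits_along (Ys l) P Q"
  shows "decomposable scale X Xs Ys"
  unfolding decomposable_def
  using assms splits_along_rep_eval[OF assms(1-5)] unfolding splits_along_def by blast

lemma complement_inside_summand:
  assumes S: "subspace S" and N: "subspace N" and M: "subspace M"
    and "N \<subseteq> M" and "ssum S N \<noteq> ssum S M"
  obtains Q where "subspace Q" "Q \<subseteq> M" "ssum S N \<inter> Q = {0}"
    "ssum (ssum S N) Q = ssum S M" "Q \<noteq> {0}"
proof -
  \<comment> \<open>by the modular law \<open>W = (S + N) \<inter> M\<close>, so a complement of \<open>W\<close> in \<open>M\<close> meets \<open>S + N\<close> trivially\<close>
  define W where "W = ssum N (S \<inter> M)"
  have W: "subspace W" "W \<subseteq> M"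
    unfolding W_def
    using subspace_ssum[OF N subspace_inter[OF S M]] ssum_least[OF M \<open>N \<subseteq> M\<close> Int_lower2]
    by auto
  obtain Q where Q: "subspace Q" "Q \<subseteq> M" "W \<inter> Q = {0}" "ssum W Q = M"
    using subspace_complement_exists[OF W(1) M W(2)] by blast
  have SN: "subspace (ssum S N)" using subspace_ssum[OF S N] .
  have W_SN: "W \<subseteq> ssum S N"
    unfolding W_def by (rule ssum_least[OF SN ssum_ge2[OF S] order_trans[OF Int_lower1 ssum_ge1[OF N]]])
  have SN_M: "ssum S N \<inter> M \<subseteq> W"
  proof
    fix v assume v: "v \<in> ssum S N \<inter> M"
    then obtain s n where sn: "v = s + n" "s \<in> S" "n \<in> N" unfolding ssum_def by blast
    have "s = v - n" using sn(1) by simp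
    moreover have "v - n \<in> M" using subspace_diff[OF M] v sn(3) \<open>N \<subseteq> M\<close> by blast
    ultimately have "s \<in> S \<inter> M" using sn(2) by simp
    moreover have "v = n + s" using sn(1) by (simp add: add.commute)
    ultimately show "v \<in> W"
      unfolding W_def ssum_def using sn(3) by blast
  qed
  have "ssum S N \<inter> Q = {0}"
    using SN_M Q(2,3) subspace_0[OF SN] subspace_0[OF Q(1)] by blast
  moreover have "ssum (ssum S N) Q = ssum S M"
  proof
    show "ssum (ssum S N) Q \<subseteq> ssum S M"
      by (rule ssum_least[OF subspace_ssum[OF S M] ssum_mono[OF subset_refl \<open>N \<subseteq> M\<close>]
            order_trans[OF Q(2) ssum_ge2[OF S]]])
    have "M \<subseteq> ssum (ssum S N) Q"
      using ssum_mono[OF W_SN subset_refl, of Q] unfolding Q(4) .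
    then show "ssum S M \<subseteq> ssum (ssum S N) Q"
      by (rule ssum_least[OF subspace_ssum[OF SN Q(1)] order_trans[OF ssum_ge1[OF N] ssum_ge1[OF Q(1)]]])
  qed
  moreover have "Q \<noteq> {0}"
  proof
    assume "Q = {0}"
    then have "M \<subseteq> W"
      using Q(4) ssum_least[OF W(1) subset_refl, of "{0}"] subspace_0[OF W(1)] by auto
    then have "ssum S M \<subseteq> ssum S N"
      using ssum_least[OF SN ssum_ge1[OF N]] W_SN by blast
    moreover have "ssum S N \<subseteq> ssum S M"
      using ssum_mono[OF subset_refl \<open>N \<subseteq> M\<close>] .
    ultimately show False using \<open>ssum S N \<noteq> ssum S M\<close> by blast
  qed
  ultimately show ?thesis using that Q(1,2) by blast
qed

text \<open>Take the first step \<open>N \<subseteq> M\<close> of the chain \<open>0 \<subseteq> A \<subseteq> B \<subseteq> X\<close> with \<open>S + M = X\<close>.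
  Then \<open>X = (S + N) \<oplus> Q\<close> with \<open>Q \<subseteq> M\<close>, and every member of the chain either lies in
  \<open>S + N\<close> or contains \<open>Q\<close>.\<close>
lemma direct_sum_adapted_to_flag:
  assumes S: "subspace S" and A: "subspace A" and B: "subspace B" and X: "subspace X"
    and "A \<subseteq> B" "B \<subseteq> X" "S \<subseteq> X" "S \<noteq> {0}" "S \<noteq> X"
  obtains P Q where "subspace P" "subspace Q" "P \<inter> Q = {0}" "ssum P Q = X"
    "P \<noteq> {0}" "Q \<noteq> {0}" "S \<subseteq> P" "splits_along A P Q" "splits_along B P Q"
proof -
  obtain N M where NM: "subspace N" "subspace M" "N \<subseteq> M" "ssum S M = X" "ssum S N \<noteq> X"
    and chain: "\<And>L. L \<in> {A, B} \<Longrightarrow> L \<subseteq> N \<or> M \<subseteq> L"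
  proof (cases "ssum S A = X")
    case True
    have "ssum S {0} = S"
      using ssum_ge1[of "{0}" S] ssum_least[OF S subset_refl, of "{0}"] subspace_0[OF S] by auto
    with True show ?thesis
      by (intro that[of "{0}" A]) (use A \<open>A \<subseteq> B\<close> \<open>S \<noteq> X\<close> subspace_0[OF A] in auto)
  next
    case SA: False
    show ?thesis
    proof (cases "ssum S B = X")
      case True
      with SA show ?thesis
        by (intro that[of A B]) (use A B \<open>A \<subseteq> B\<close> in auto)
    next
      case False
      have "ssum S X = X"
        using ssum_least[OF X \<open>S \<subseteq> X\<close> subset_refl] ssum_ge2[OF S, of X] by auto
      with False show ?thesis
        by (intro that[of B X]) (use B X \<open>A \<subseteq> B\<close> \<open>B \<subseteq> X\<close> in auto)
    qed
  qed
  define P where "P = ssum S N"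
  have "ssum S N \<noteq> ssum S M" using NM(4,5) by simp
  then obtain Q where Q: "subspace Q" "Q \<subseteq> M" "P \<inter> Q = {0}" "ssum P Q = X" "Q \<noteq> {0}"
    using complement_inside_summand[OF S NM(1-3)] unfolding P_def NM(4) by blast
  have P: "subspace P" "S \<subseteq> P" "N \<subseteq> P"
    unfolding P_def using subspace_ssum[OF S NM(1)] ssum_ge1[OF NM(1)] ssum_ge2[OF S] by auto
  have "P \<noteq> {0}" using P(2) \<open>S \<noteq> {0}\<close> subspace_0[OF S] by blast
  have "splits_along L P Q" if L: "L \<in> {A, B}" for L
  proof -
    have "subspace L" "L \<subseteq> X" using L A B \<open>A \<subseteq> B\<close> \<open>B \<subseteq> X\<close> by auto
    from chain[OF L] show ?thesis
    proof
      assume "L \<subseteq> N"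
      then show ?thesis using splits_along_subset[OF \<open>subspace L\<close> Q(1)] P(3) by blast
    next
      assume "M \<subseteq> L"
      then show ?thesis
        using splits_along_superset[OF \<open>subspace L\<close>] Q(2,4) \<open>L \<subseteq> X\<close> by blast
    qed
  qed
  then show ?thesis
    using that[OF P(1) Q(1,3,4) \<open>P \<noteq> {0}\<close> Q(5) P(2)] by blast
qed

lemma ssum_Ys_trivial_or_total:
  assumes rep: "is_rep scale X Xs Ys" and ind: "indecomposable scale X Xs Ys"
    and ij: "i \<in> {1,2,3}" "j \<in> {1,2,3}" "i \<noteq> j"
  shows "ssum (Ys i) (Ys j) \<in> {{0}, X}"
proof (rule ccontr)
  define S where "S = ssum (Ys i) (Ys j)"
  assume "ssum (Ys i) (Ys j) \<notin> {{0}, X}"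
  then have "S \<noteq> {0}" "S \<noteq> X" unfolding S_def by auto
  have "\<exists>k\<in>{1,2,3}. k \<noteq> i \<and> k \<noteq> j" using ij by auto
  then obtain k where k: "k \<in> {1,2,3}" "k \<noteq> i" "k \<noteq> j" by blast
  note gen = is_rep_generators[OF rep]
  have X: "subspace X" using is_rep_subspace[OF rep] .
  have gi: "subspace (Ys i)" "Ys i \<subseteq> X" using gen[OF ij(1)] by auto
  have gj: "subspace (Ys j)" "Ys j \<subseteq> X" using gen[OF ij(2)] by auto
  have gk: "subspace (Xs k)" "subspace (Ys k)" "Xs k \<subseteq> Ys k" "Ys k \<subseteq> X" using gen[OF k(1)] by auto
  have S: "subspace S" "S \<subseteq> X"
    unfolding S_def using subspace_ssum[OF gi(1) gj(1)] ssum_least[OF X gi(2) gj(2)] by auto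
  obtain P Q where PQ: "subspace P" "subspace Q" "P \<inter> Q = {0}" "ssum P Q = X"
    "P \<noteq> {0}" "Q \<noteq> {0}" "S \<subseteq> P" and k_splits: "splits_along (Xs k) P Q" "splits_along (Ys k) P Q"
    using direct_sum_adapted_to_flag[OF S(1) gk(1,2) X gk(3,4) S(2) \<open>S \<noteq> {0}\<close> \<open>S \<noteq> X\<close>] by blast
  have "decomposable scale X Xs Ys"
  proof (rule decomposableI[OF rep PQ(1-6)])
    fix l :: nat assume l: "l \<in> {1,2,3}"
    show "splits_along (Xs l) P Q \<and> splits_along (Ys l) P Q"
    proof (cases "l = k")
      case False
      then have "l = i \<or> l = j" using l ij k by auto
      then have "Ys l \<subseteq> P"
        using ssum_ge1[OF gj(1)] ssum_ge2[OF gi(1)] PQ(7) unfolding S_def by blast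
      then show ?thesis
        using splits_along_subset[OF _ PQ(2)] gen[OF l] by blast
    qed (use k_splits in simp)
  qed
  with ind show False unfolding indecomposable_def by blast
qed

end

theorem mainTheorem12:
  fixes scale :: "'k::field \<Rightarrow> 'v::ab_group_add \<Rightarrow> 'v"
    and i j :: nat
  assumes "vector_space scale"
    and "i \<in> {1,2,3}" and "j \<in> {1,2,3}" and "i \<noteq> j"
  shows "perfect scale (Join (Yg i) (Yg j))"
proof -
  interpret vector_space scale by fact
  show ?thesis
    unfolding perfect_def using ssum_Ys_trivial_or_total[OF _ _ assms(2-4)] by auto
qed

end
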